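(* Let $(E,\mathcal A,\mu)$ be a finite measure space and let $B=(B_x)_{x\in E}$ be a centered, jointly measurable Gaussian field with $B_x\sim N(0,1)$ for every $x\in E$ and covariance kernel $K(x,y)=\mathbb E[B_xB_y]$. Suppose that there exists $\beta>0$ such that $$\int_{E^2}K(x,y)^q\,\mu(dx)\,\mu(dy)\asymp q^{-\beta}\qquad (q\to\infty).$$ Then for every $u\in\mathbb R$ and every $p\in\mathbb N$: $V(u)\in\mathbb D^{p,2}$ if and only if $p<\beta+\tfrac12$.
   Context: Hermite polynomials: $H_0(x)=1$, $H_1(x)=x$, $H_{q+1}(x)=xH_q(x)-qH_{q-1}(x)$. Let $\phi(x)=e^{-x^2/2}/\sqrt{2\pi}$. For $\varphi\in L^2(\mathbb R,\phi(x)dx)$ set $a_q(\varphi)=\frac1{q!}\int_{\mathbb R}H_q(x)\varphi(x)\phi(x)\,dx$, and define the functional $Y(\varphi)=\int_E\varphi(B_x)\,\mu(dx)$, whose $q$-th chaotic component is $Y(\varphi)[q]=a_q(\varphi)\int_E H_q(B_x)\,\mu(dx)$, with $\mathrm{Var}(Y(\varphi)[q])=q!\,a_q(\varphi)^2\int_{E^2}K(x,y)^q\mu(dx)\mu(dy)$. For $p\in\mathbb N$, we say $Y(\varphi)\in\mathbb D^{p,2}$ (has $p$-th square integrable Malliavin derivative) iff $\sum_{q\ge0}q^p\,q!\,a_q(\varphi)^2\int_{E^2}K(x,y)^q\,\mu(dx)\mu(dy)<\infty$. The excursion measure at level $u$ is $V(u)=\int_E\mathbf 1_{\{B_x\ge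 u\}}\mu(dx)=Y(\mathbf 1_{[u,\infty)})$. Notation: for positive functions, $f(q)\asymp g(q)$ means $\limsup_{q\to\infty} f(q)/g(q)<\infty$ and $\limsup_{q\to\infty} g(q)/f(q)<\infty$ (both ratios eventually bounded). *)

theory Defs
  imports "HOL-Probability.Probability"
begin

fun hermite :: "nat \<Rightarrow> real \<Rightarrow> real" where
  "hermite 0 x = 1"
| "hermite (Suc 0) x = x"
| "hermite (Suc (Suc q)) x = x * hermite (Suc q) x - real (Suc q) * hermite q x"

definition hermite_coeff :: "(real \<Rightarrow> real) \<Rightarrow> nat \<Rightarrow> real" where
  "hermite_coeff f q =
     (1 / fact q) * integral\<^sup>L lborel (\<lambda>x. hermite q x * f x * std_normal_density x)"

definition centered_gaussian_rv :: "'w measure \<Rightarrow> ('w \<Rightarrow> real) \<Rightarrow> bool" where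
  "centered_gaussian_rv P X \<longleftrightarrow>
     (AE w in P. X w = 0) \<or>
     (\<exists>\<sigma>>0. distributed P lborel X (\<lambda>x. ennreal (normal_density 0 \<sigma> x)))"

definition std_gaussian_field :: "'a measure \<Rightarrow> 'w measure \<Rightarrow> ('a \<Rightarrow> 'w \<Rightarrow> real) \<Rightarrow> bool" where
  "std_gaussian_field M P B \<longleftrightarrow>
     prob_space P \<and>
     (\<lambda>(x, w). B x w) \<in> borel_measurable (M \<Otimes>\<^sub>M P) \<and>
     (\<forall>x\<in>space M. distributed P lborel (B x) (\<lambda>t. ennreal (normal_density 0 1 t))) \<and>
     (\<forall>S c. finite S \<longrightarrow> S \<subseteq> space M \<longrightarrow>
        centered_gaussian_rv P (\<lambda>w. \<Sum>x\<in>S. c x * B x w))"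

definition cov_kernel :: "'w measure \<Rightarrow> ('a \<Rightarrow> 'w \<Rightarrow> real) \<Rightarrow> 'a \<Rightarrow> 'a \<Rightarrow> real" where
  "cov_kernel P B x y = integral\<^sup>L P (\<lambda>w. B x w * B y w)"

definition kernel_moment :: "'a measure \<Rightarrow> ('a \<Rightarrow> 'a \<Rightarrow> real) \<Rightarrow> nat \<Rightarrow> real" where
  "kernel_moment M K q = integral\<^sup>L (M \<Otimes>\<^sub>M M) (\<lambda>(x, y). K x y ^ q)"

text \<open>Y(phi) has a p-th square integrable Malliavin derivative (series criterion).\<close>
definition in_D_p2 :: "'a measure \<Rightarrow> ('a \<Rightarrow> 'a \<Rightarrow> real) \<Rightarrow> (real \<Rightarrow> real) \<Rightarrow> nat \<Rightarrow> bool" where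
  "in_D_p2 M K f p \<longleftrightarrow>
     summable (\<lambda>q. real q ^ p * fact q * (hermite_coeff f q)\<^sup>2 * kernel_moment M K q)"

definition asymp_comparable :: "(nat \<Rightarrow> real) \<Rightarrow> (nat \<Rightarrow> real) \<Rightarrow> bool" where
  "asymp_comparable f g \<longleftrightarrow>
     (\<forall>\<^sub>F q in sequentially. f q > 0 \<and> g q > 0) \<and>
     (\<exists>C. \<forall>\<^sub>F q in sequentially. f q / g q \<le> C) \<and>
     (\<exists>C. \<forall>\<^sub>F q in sequentially. g q / f q \<le> C)"

end

theory Submission
  imports Defs "HOL-Real_Asymp.Real_Asymp"
begin

text \<open>
  Integrating the identity \<open>(H\<^sub>n \<phi>)' = - H\<^bsub>n+1\<^esub> \<phi>\<close> over \<open>[u, \<infinity>)\<close> gives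
  \<open>a\<^bsub>n+1\<^esub>(1\<^bsub>[u,\<infinity>)\<^esub>) = H\<^sub>n(u) \<phi>(u) / (n+1)!\<close>, so the \<open>q = n+1\<close> term of the series
  defining \<open>\<bbbD>\<^bsup>p,2\<^esup>\<close> is \<open>\<phi>(u)\<^sup>2 (n+1)\<^bsup>p-1\<^esup> c\<^sub>n \<integral>K\<^bsup>n+1\<^esup>\<close> with
  \<open>c\<^sub>n = H\<^sub>n(u)\<^sup>2 / n!\<close>; by hypothesis the kernel moment may be replaced by
  \<open>(n+1)\<^bsup>-\<beta>\<^esup>\<close>. Everything thus reduces to: \<open>\<Sum> (n+1)\<^sup>s c\<^sub>n < \<infinity>\<close> iff \<open>s < -1/2\<close>.

  For this, the confluent Christoffel--Darboux formula expresses \<open>S\<^sub>n = \<Sum>\<^bsub>k<n\<^esub> c\<^sub>k\<close>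
  through \<open>c\<^sub>n\<close>, \<open>c\<^bsub>n+1\<^esub>\<close> and the cross term \<open>u H\<^bsub>n+1\<^esub>(u) H\<^sub>n(u) / n!\<close>, which is
  \<open>O(\<surd>n (c\<^sub>n + c\<^bsub>n+1\<^esub>))\<close>. Hence \<open>c\<^sub>n + c\<^bsub>n+1\<^esub> \<asymp> S\<^sub>n / n\<close> and, more
  precisely, \<open>S\<^bsub>n+2\<^esub> = S\<^sub>n (1 + 1/n + O(n\<^bsup>-3/2\<^esup>))\<close>. The two-step ratios of
  \<open>S\<^sub>n\<^sup>2 / n\<close> are therefore \<open>1 + O(n\<^bsup>-3/2\<^esup>)\<close>, a summable deviation, so
  \<open>S\<^sub>n \<asymp> \<surd>n\<close> and \<open>c\<^sub>n + c\<^bsub>n+1\<^esub> \<asymp> n\<^bsup>-1/2\<^esup>\<close>, which decides the series.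
\<close>

section \<open>Hermite polynomials and the Gaussian density\<close>

lemma hermite_Suc: "hermite (Suc n) x = x * hermite n x - real n * hermite (n - 1) x"
  by (cases n) auto

lemma hermite_has_real_derivative:
  "(hermite n has_real_derivative real n * hermite (n - 1) x) (at x)"
proof (induction n arbitrary: x rule: induct_nat_012)
  case 0
  have "hermite 0 = (\<lambda>_. 1)" by (rule ext) simp
  then show ?case by simp
next
  case 1
  have "hermite (Suc 0) = (\<lambda>x. x)" by (rule ext) simp
  then show ?case by simp
next
  case (ge2 n)
  have "hermite (Suc (Suc n)) = (\<lambda>x. x * hermite (Suc n) x - real (Suc n) * hermite n x)"
    by (rule ext) simp
  moreover have "((\<lambda>x. x * hermite (Suc n) x - real (Suc n) * hermite n x) has_real_derivative
      x * (real (Suc n) * hermite n x) + hermite (Suc n) x - real (Suc n) * (real n * hermite (n - 1) x)) (at x)"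
    by (auto intro!: derivative_eq_intros ge2.IH)
  moreover have "x * (real (Suc n) * hermite n x) + hermite (Suc n) x - real (Suc n) * (real n * hermite (n - 1) x)
      = real (Suc (Suc n)) * hermite (Suc (Suc n) - 1) x"
    by (simp add: hermite_Suc[of n x] algebra_simps)
  ultimately show ?case by simp
qed

lemma isCont_hermite: "isCont (hermite n) x"
  using hermite_has_real_derivative by (rule DERIV_isCont)

lemma borel_measurable_hermite [measurable]: "hermite n \<in> borel_measurable borel"
  by (intro borel_measurable_continuous_onI continuous_at_imp_continuous_on ballI isCont_hermite)

lemma abs_le_one_plus_sq: "\<bar>x::real\<bar> \<le> 1 + x\<^sup>2"
proof -
  have "0 \<le> (\<bar>x\<bar> - 1)\<^sup>2" by simp
  then show ?thesis by (simp add: power2_eq_square algebra_simps)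
qed

lemma abs_hermite_le: "\<bar>hermite n x\<bar> \<le> fact n * (1 + x\<^sup>2) ^ n"
proof (induction n rule: induct_nat_012)
  case (ge2 n)
  have x: "\<bar>x\<bar> \<le> 1 + x\<^sup>2" and one: "1 \<le> 1 + x\<^sup>2"
    by (simp_all add: abs_le_one_plus_sq)
  have "(1 + x\<^sup>2) ^ n \<le> (1 + x\<^sup>2) ^ Suc (Suc n)"
    using one by (intro power_increasing) auto
  then have pow: "real (Suc n) * (fact n * (1 + x\<^sup>2) ^ n) \<le> fact (Suc n) * (1 + x\<^sup>2) ^ Suc (Suc n)"
    using mult_left_mono[of _ _ "fact (Suc n)"] by (simp add: mult.assoc)
  have "\<bar>hermite (Suc (Suc n)) x\<bar> = \<bar>x * hermite (Suc n) x - real (Suc n) * hermite n x\<bar>"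
    by simp
  also have "\<dots> \<le> \<bar>x\<bar> * \<bar>hermite (Suc n) x\<bar> + real (Suc n) * \<bar>hermite n x\<bar>"
    using abs_triangle_ineq4 by (metis abs_mult abs_of_nat)
  also have "\<dots> \<le> (1 + x\<^sup>2) * (fact (Suc n) * (1 + x\<^sup>2) ^ Suc n) + real (Suc n) * (fact n * (1 + x\<^sup>2) ^ n)"
    using ge2.IH x by (intro add_mono mult_mono) auto
  also have "\<dots> \<le> fact (Suc (Suc n)) * (1 + x\<^sup>2) ^ Suc (Suc n)"
    using pow by (simp add: algebra_simps)
  finally show ?case .
qed (simp_all add: abs_le_one_plus_sq)

lemma abs_hermite_std_normal_le:
  "\<bar>hermite n x * std_normal_density x\<bar> \<le> fact n * ((1 + x\<^sup>2) ^ n * std_normal_density x)"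
  using mult_right_mono[OF abs_hermite_le normal_density_nonneg]
  by (simp add: abs_mult normal_density_nonneg mult.assoc)

lemma integrable_hermite_std_normal: "integrable lborel (\<lambda>x. hermite n x * std_normal_density x)"
proof (rule Bochner_Integration.integrable_bound)
  have "(1 + x\<^sup>2) ^ n = (\<Sum>k\<le>n. real (n choose k) * x ^ (2 * k))" for x :: real
    using binomial_ring[of "x\<^sup>2" 1 n] by (simp add: add.commute power_mult)
  then have expand: "(\<lambda>x. (1 + x\<^sup>2) ^ n * std_normal_density x) =
        (\<lambda>x. \<Sum>k\<le>n. real (n choose k) * (std_normal_density x * x ^ (2 * k)))"
    by (simp add: sum_distrib_left sum_distrib_right mult_ac)
  have "integrable lborel (\<lambda>x. (1 + x\<^sup>2) ^ n * std_normal_density x)"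
    unfolding expand
    by (intro Bochner_Integration.integrable_mult_right Bochner_Integration.integrable_sum
        integrable_std_normal_moment)
  then show "integrable lborel (\<lambda>x. fact n * ((1 + x\<^sup>2) ^ n * std_normal_density x))"
    by (rule Bochner_Integration.integrable_mult_right)
  show "AE x in lborel. norm (hermite n x * std_normal_density x)
          \<le> norm (fact n * ((1 + x\<^sup>2) ^ n * std_normal_density x))"
    using abs_hermite_std_normal_le by (simp add: normal_density_nonneg)
qed measurable

lemma hermite_std_normal_tendsto_0: "((\<lambda>x. hermite n x * std_normal_density x) \<longlongrightarrow> 0) at_top"
proof (rule Lim_null_comparison)
  show "\<forall>\<^sub>F x in at_top. norm (hermite n x * std_normal_density x)
          \<le> fact n / sqrt (2 * pi) * ((1 + x\<^sup>2) ^ n * exp (- x\<^sup>2 / 2))"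
    using abs_hermite_std_normal_le by (simp add: std_normal_density_def)
  show "((\<lambda>x. fact n / sqrt (2 * pi) * ((1 + x\<^sup>2) ^ n * exp (- x\<^sup>2 / 2))) \<longlongrightarrow> 0) at_top"
    by real_asymp
qed

lemma std_normal_density_has_real_derivative:
  "(std_normal_density has_real_derivative - x * std_normal_density x) (at x)"
proof -
  have deriv: "((\<lambda>x. c * exp (- x\<^sup>2 / 2)) has_real_derivative - x * (c * exp (- x\<^sup>2 / 2))) (at x)"
    for c :: real
    by (auto intro!: derivative_eq_intros)
  have density: "std_normal_density = (\<lambda>x. 1 / sqrt (2 * pi) * exp (- x\<^sup>2 / 2))"
    by (simp add: fun_eq_iff normal_density_def)
  show ?thesis
    unfolding density by (rule deriv)
qed

lemma isCont_std_normal_density: "isCont std_normal_density x"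
  using std_normal_density_has_real_derivative by (rule DERIV_isCont)

lemma hermite_std_normal_antiderivative:
  "((\<lambda>x. - hermite n x * std_normal_density x) has_real_derivative
      hermite (Suc n) x * std_normal_density x) (at x)"
proof -
  have "((\<lambda>x. - hermite n x * std_normal_density x) has_real_derivative
      - hermite n x * (- x * std_normal_density x) - real n * hermite (n - 1) x * std_normal_density x) (at x)"
    by (auto intro!: derivative_eq_intros hermite_has_real_derivative
        std_normal_density_has_real_derivative)
  then show ?thesis
    by (simp add: hermite_Suc[of n x] algebra_simps)
qed

lemma integral_hermite_std_normal_atLeast:
  "(LINT x|lborel. hermite (Suc n) x * indicator {u..} x * std_normal_density x)
     = hermite n u * std_normal_density u"
proof -
  define f where "f x = hermite (Suc n) x * std_normal_density x" for x
  define F where "F x = - hermite n x * std_normal_density x" for x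
  have isCont_F: "isCont F x" for x
    unfolding F_def by (intro continuous_intros isCont_hermite isCont_std_normal_density)
  have "(LINT x|lborel. hermite (Suc n) x * indicator {u..} x * std_normal_density x)
      = (LINT x|lborel. indicator (einterval u \<infinity>) x *\<^sub>R f x)"
    using AE_lborel_singleton[of u]
    by (intro integral_cong_AE) (auto simp: f_def indicator_def)
  also have "\<dots> = (LBINT x=ereal u..\<infinity>. f x)"
    by (simp add: interval_lebesgue_integral_le_eq set_lebesgue_integral_def)
  also have "\<dots> = 0 - F u"
  proof (rule interval_integral_FTC_integrable)
    show "(F has_vector_derivative f x) (at x)" for x
      unfolding F_def f_def has_real_derivative_iff_has_vector_derivative[symmetric]
      by (rule hermite_std_normal_antiderivative)
    show "isCont f x" for x
      unfolding f_def by (intro continuous_intros isCont_hermite isCont_std_normal_density)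
    show "set_integrable lborel (einterval u \<infinity>) f"
      unfolding set_integrable_def f_def
      by (intro integrable_mult_indicator integrable_hermite_std_normal) auto
    show "((F \<circ> real_of_ereal) \<longlongrightarrow> F u) (at_right (ereal u))"
      using isCont_F[of u] by (simp add: ereal_tendsto_simps isCont_def filterlim_at_split)
    have "(F \<longlongrightarrow> 0) at_top"
      using tendsto_minus[OF hermite_std_normal_tendsto_0[of n]] by (simp add: F_def[abs_def])
    then show "((F \<circ> real_of_ereal) \<longlongrightarrow> 0) (at_left \<infinity>)"
      by (simp add: ereal_tendsto_simps)
  qed simp
  finally show ?thesis
    by (simp add: F_def)
qed

lemma hermite_coeff_indicator_atLeast_Suc:
  "hermite_coeff (indicator {u..}) (Suc n) = hermite n u * std_normal_density u / fact (Suc n)"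
  using integral_hermite_std_normal_atLeast[of n u] by (simp add: hermite_coeff_def)

section \<open>The Christoffel--Darboux sums\<close>

definition hermite_sq :: "real \<Rightarrow> nat \<Rightarrow> real" where
  "hermite_sq u n = hermite n u ^ 2 / fact n"

text \<open>\<open>hermite_sq_sum u n\<close> is the diagonal value at \<open>u\<close> of the \<open>n\<close>-th Christoffel--Darboux
  kernel of the orthonormal Hermite polynomials \<open>H\<^sub>k / \<surd>k!\<close>.\<close>

definition hermite_sq_sum :: "real \<Rightarrow> nat \<Rightarrow> real" where
  "hermite_sq_sum u n = (\<Sum>k<n. hermite_sq u k)"

definition hermite_cross :: "real \<Rightarrow> nat \<Rightarrow> real" where
  "hermite_cross u n = hermite (Suc n) u * hermite n u / fact n"

lemma hermite_sq_nonneg: "hermite_sq u n \<ge> 0"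
  by (simp add: hermite_sq_def)

lemma hermite_sq_sum_Suc: "hermite_sq_sum u (Suc n) = hermite_sq_sum u n + hermite_sq u n"
  by (simp add: hermite_sq_sum_def)

lemma hermite_sq_sum_mono: "m \<le> n \<Longrightarrow> hermite_sq_sum u m \<le> hermite_sq_sum u n"
  unfolding hermite_sq_sum_def by (intro sum_mono2) (auto intro: hermite_sq_nonneg)

lemma hermite_sq_sum_ge_1: "1 \<le> n \<Longrightarrow> 1 \<le> hermite_sq_sum u n"
  using hermite_sq_sum_mono[of 1 n u] by (simp add: hermite_sq_sum_def hermite_sq_def)

lemma hermite_sq_Suc: "real (Suc n) * hermite_sq u (Suc n) = hermite (Suc n) u ^ 2 / fact n"
  by (simp add: hermite_sq_def del: of_nat_Suc)

lemma christoffel_darboux: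
  "hermite_sq_sum u (Suc n) * fact n =
     hermite (Suc n) u ^ 2 + real (Suc n) * hermite n u ^ 2 - u * hermite (Suc n) u * hermite n u"
proof (induction n)
  case 0
  then show ?case by (simp add: hermite_sq_sum_def hermite_sq_def power2_eq_square)
next
  case (Suc n)
  define a b where "a = hermite n u" and "b = hermite (Suc n) u"
  have "hermite_sq_sum u (Suc (Suc n)) * fact (Suc n)
      = real (Suc n) * (hermite_sq_sum u (Suc n) * fact n) + b ^ 2"
    using hermite_sq_Suc[of n u]
    by (simp add: hermite_sq_sum_Suc[of u "Suc n"] b_def algebra_simps del: of_nat_Suc)
  also have "\<dots> = real (Suc n) * (b ^ 2 + real (Suc n) * a ^ 2 - u * b * a) + b ^ 2"
    by (simp add: Suc.IH a_def b_def)
  also have "\<dots> = (u * b - real (Suc n) * a) ^ 2 + real (Suc (Suc n)) * b ^ 2 - u * (u * b - real (Suc n) * a) * b"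
    by (simp add: power2_eq_square algebra_simps)
  finally show ?case
    by (simp add: a_def b_def)
qed

lemma hermite_sq_sum_Suc_eq:
  "hermite_sq_sum u (Suc n) = real (Suc n) * (hermite_sq u n + hermite_sq u (Suc n)) - u * hermite_cross u n"
proof -
  have "hermite_sq_sum u (Suc n)
      = (hermite (Suc n) u ^ 2 + real (Suc n) * hermite n u ^ 2 - u * hermite (Suc n) u * hermite n u) / fact n"
    using christoffel_darboux[of u n] by (simp add: eq_divide_eq)
  then show ?thesis
    by (simp add: distrib_left hermite_sq_Suc hermite_sq_def hermite_cross_def
        add_divide_distrib diff_divide_distrib del: of_nat_Suc)
qed

lemma hermite_cross_sq: "hermite_cross u n ^ 2 = real (Suc n) * hermite_sq u n * hermite_sq u (Suc n)"
  by (simp add: hermite_sq_Suc mult.commute[of "real (Suc n)"] mult.assoc hermite_sq_def hermite_cross_def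
      power2_eq_square del: of_nat_Suc)

lemma abs_hermite_cross_le:
  assumes "u\<^sup>2 \<le> real (Suc n)"
  shows "\<bar>u * hermite_cross u n\<bar> \<le> real (Suc n) * (hermite_sq u n + hermite_sq u (Suc n)) / 2"
proof -
  define c d where "c = hermite_sq u n" and "d = hermite_sq u (Suc n)"
  have "0 \<le> c" "0 \<le> d" by (simp_all add: c_def d_def hermite_sq_nonneg)
  have "(u * hermite_cross u n)\<^sup>2 = u\<^sup>2 * (real (Suc n) * (c * d))"
    by (simp add: power_mult_distrib hermite_cross_sq c_def d_def mult_ac)
  also have "\<dots> \<le> real (Suc n) * (real (Suc n) * ((c + d)\<^sup>2 / 4))"
    using assms \<open>0 \<le> c\<close> \<open>0 \<le> d\<close> sum_squares_bound[of c d]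
    by (intro mult_mono) (auto simp: power2_eq_square algebra_simps)
  also have "\<dots> = (real (Suc n) * (c + d) / 2)\<^sup>2"
    by (simp add: power2_eq_square)
  finally have "\<bar>u * hermite_cross u n\<bar> \<le> \<bar>real (Suc n) * (c + d) / 2\<bar>"
    by (simp only: abs_le_square_iff)
  then show ?thesis
    using \<open>0 \<le> c\<close> \<open>0 \<le> d\<close> by (simp add: c_def d_def del: of_nat_Suc)
qed

lemma hermite_sq_pair_le:
  assumes "u\<^sup>2 \<le> real n" "2 \<le> n"
  shows "real n * (hermite_sq u n + hermite_sq u (Suc n)) \<le> 4 * hermite_sq_sum u n"
proof -
  define X where "X = hermite_sq u n + hermite_sq u (Suc n)"
  have "0 \<le> X" "hermite_sq u n \<le> X"
    by (simp_all add: X_def hermite_sq_nonneg)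
  moreover have "\<bar>u * hermite_cross u n\<bar> \<le> real (Suc n) * X / 2"
    unfolding X_def using assms by (intro abs_hermite_cross_le) simp
  moreover have "hermite_sq_sum u n + hermite_sq u n = real (Suc n) * X - u * hermite_cross u n"
    using hermite_sq_sum_Suc_eq[of u n] by (simp add: hermite_sq_sum_Suc X_def)
  moreover have "2 * X \<le> real n * X"
    using assms \<open>0 \<le> X\<close> by (intro mult_right_mono) auto
  ultimately show ?thesis
    unfolding X_def[symmetric] by (simp add: algebra_simps)
qed

lemma hermite_sq_sum_Suc_le:
  assumes "u\<^sup>2 \<le> real n"
  shows "hermite_sq_sum u (Suc n) \<le> 3 / 2 * real (Suc n) * (hermite_sq u n + hermite_sq u (Suc n))"
proof -
  have "\<bar>u * hermite_cross u n\<bar> \<le> real (Suc n) * (hermite_sq u n + hermite_sq u (Suc n)) / 2"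
    using assms by (intro abs_hermite_cross_le) simp
  then show ?thesis
    using hermite_sq_sum_Suc_eq[of u n] by linarith
qed

lemma hermite_sq_pair_eq:
  "real n * (hermite_sq u n + hermite_sq u (Suc n))
     = hermite_sq_sum u n + (u * hermite_cross u n - hermite_sq u (Suc n))"
  using hermite_sq_sum_Suc_eq[of u n] by (simp add: hermite_sq_sum_Suc algebra_simps)

lemma sq_hermite_pair_error_le:
  "(u * hermite_cross u n - hermite_sq u (Suc n))\<^sup>2
     \<le> (u\<^sup>2 * real (Suc n) / 2 + 2) * (hermite_sq u n + hermite_sq u (Suc n))\<^sup>2"
proof -
  define c d X where "c = hermite_sq u n" and "d = hermite_sq u (Suc n)" and "X = c + d"
  have "0 \<le> c" "0 \<le> d" by (simp_all add: c_def d_def hermite_sq_nonneg)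
  have "4 * (c * d) \<le> X\<^sup>2"
    using sum_squares_bound[of c d] by (simp add: X_def power2_eq_square algebra_simps)
  then have "u\<^sup>2 * real (Suc n) * (4 * (c * d)) \<le> u\<^sup>2 * real (Suc n) * X\<^sup>2"
    by (intro mult_left_mono) auto
  moreover have "d\<^sup>2 \<le> X\<^sup>2"
    using \<open>0 \<le> c\<close> \<open>0 \<le> d\<close> by (simp add: X_def power_mono)
  moreover have "(u * hermite_cross u n - d)\<^sup>2 \<le> 2 * (u * hermite_cross u n)\<^sup>2 + 2 * d\<^sup>2"
    using zero_le_power2[of "u * hermite_cross u n + d"] by (simp add: power2_eq_square algebra_simps)
  moreover have "2 * (u * hermite_cross u n)\<^sup>2 = u\<^sup>2 * real (Suc n) * (4 * (c * d)) / 2"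
    by (simp add: power_mult_distrib hermite_cross_sq c_def d_def mult_ac)
  moreover have "(u\<^sup>2 * real (Suc n) / 2 + 2) * X\<^sup>2 = u\<^sup>2 * real (Suc n) * X\<^sup>2 / 2 + 2 * X\<^sup>2"
    by (simp add: algebra_simps)
  ultimately show ?thesis
    unfolding c_def d_def X_def by linarith
qed

lemma hermite_sq_pair_error_le:
  assumes "u\<^sup>2 \<le> real n" "2 \<le> n"
  shows "(u * hermite_cross u n - hermite_sq u (Suc n))\<^sup>2 * real n \<le> 16 * (u\<^sup>2 + 2) * (hermite_sq_sum u n)\<^sup>2"
proof -
  define X where "X = hermite_sq u n + hermite_sq u (Suc n)"
  have "u\<^sup>2 * real (Suc n) / 2 + 2 \<le> real n * (u\<^sup>2 + 2)"
  proof -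
    have "u\<^sup>2 * real (Suc n) \<le> u\<^sup>2 * (2 * real n)"
      using assms by (intro mult_left_mono) auto
    moreover have "2 \<le> real n"
      using assms by simp
    moreover have "real n * (u\<^sup>2 + 2) = u\<^sup>2 * (2 * real n) / 2 + 2 * real n"
      by (simp add: algebra_simps)
    ultimately show ?thesis
      by linarith
  qed
  then have "(u * hermite_cross u n - hermite_sq u (Suc n))\<^sup>2 \<le> real n * (u\<^sup>2 + 2) * X\<^sup>2"
    using sq_hermite_pair_error_le[of u n] unfolding X_def[symmetric]
    by (meson mult_right_mono order_trans zero_le_power2)
  then have "(u * hermite_cross u n - hermite_sq u (Suc n))\<^sup>2 * real n \<le> real n * (u\<^sup>2 + 2) * X\<^sup>2 * real n"
    by (rule mult_right_mono) simp
  also have "\<dots> = (u\<^sup>2 + 2) * (real n * X)\<^sup>2"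
    by (simp add: power2_eq_square mult_ac)
  also have "\<dots> \<le> (u\<^sup>2 + 2) * (4 * hermite_sq_sum u n)\<^sup>2"
    using hermite_sq_pair_le[OF assms] hermite_sq_nonneg[of u n] hermite_sq_nonneg[of u "Suc n"]
    by (intro mult_left_mono power_mono) (auto simp: X_def)
  also have "\<dots> = 16 * (u\<^sup>2 + 2) * (hermite_sq_sum u n)\<^sup>2"
    by (simp add: power_mult_distrib)
  finally show ?thesis .
qed

section \<open>Sequences with summable two-step deviations\<close>

lemma bounded_if_summable_two_step_diffs:
  fixes L e :: "nat \<Rightarrow> real"
  assumes "summable e" and "\<forall>\<^sub>F n in sequentially. \<bar>L (Suc (Suc n)) - L n\<bar> \<le> e n"
  shows "\<exists>B. \<forall>\<^sub>F n in sequentially. \<bar>L n\<bar> \<le> B"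
proof -
  obtain N where N: "\<And>n. N \<le> n \<Longrightarrow> \<bar>L (Suc (Suc n)) - L n\<bar> \<le> e n"
    using assms(2) by (auto simp: eventually_sequentially)
  have e_nonneg: "0 \<le> e (k + N)" for k
    using N[of "k + N"] abs_ge_zero order_trans by fastforce
  define M where "M = max \<bar>L N\<bar> \<bar>L (Suc N)\<bar>"
  have partial: "\<bar>L (k + N)\<bar> \<le> M + (\<Sum>j<k. e (j + N))" for k
  proof (induction k rule: nat_induct2)
    case 0
    then show ?case by (simp add: M_def)
  next
    case 1
    then show ?case using e_nonneg[of 0] by (simp add: M_def)
  next
    case (step k)
    have "\<bar>L (k + 2 + N) - L (k + N)\<bar> \<le> e (k + N)"
      using N[of "k + N"] by (simp add: add.commute)
    moreover have "(\<Sum>j<k + 2. e (j + N)) = (\<Sum>j<k. e (j + N)) + e (k + N) + e (Suc k + N)"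
      by simp
    ultimately show ?case
      using step.IH e_nonneg[of "Suc k"] by linarith
  qed
  have "\<bar>L n\<bar> \<le> M + (\<Sum>j. e (j + N))" if "N \<le> n" for n
  proof -
    have "(\<Sum>j<n - N. e (j + N)) \<le> (\<Sum>j. e (j + N))"
      using assms(1) e_nonneg by (intro sum_le_suminf summable_ignore_initial_segment) auto
    then show ?thesis
      using partial[of "n - N"] that by simp
  qed
  then show ?thesis
    by (auto simp: eventually_sequentially)
qed

lemma abs_ln_one_plus_le:
  fixes y :: real
  assumes "\<bar>y\<bar> \<le> 1 / 2"
  shows "\<bar>ln (1 + y)\<bar> \<le> 2 * \<bar>y\<bar>"
proof -
  have "\<bar>ln (1 + y) - y\<bar> \<le> 2 * y\<^sup>2"
    using assms by (rule abs_ln_one_plus_x_minus_x_bound)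
  moreover have "2 * y\<^sup>2 \<le> \<bar>y\<bar>"
    using mult_left_mono[OF assms, of "2 * \<bar>y\<bar>"] by (simp add: power2_eq_square)
  ultimately show ?thesis
    by linarith
qed

lemma bounds_if_summable_two_step_ratios:
  fixes T e :: "nat \<Rightarrow> real"
  assumes "summable e"
    and "\<forall>\<^sub>F n in sequentially. 0 < T n"
    and "\<forall>\<^sub>F n in sequentially. \<bar>T (Suc (Suc n)) / T n - 1\<bar> \<le> e n"
  shows "\<exists>a A. 0 < a \<and> (\<forall>\<^sub>F n in sequentially. a \<le> T n \<and> T n \<le> A)"
proof -
  have "\<forall>\<^sub>F n in sequentially. e n < 1 / 2"
    using summable_LIMSEQ_zero[OF assms(1)] by (rule order_tendstoD) simp
  moreover have "\<forall>\<^sub>F n in sequentially. 0 < T (Suc (Suc n))"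
    using assms(2) eventually_sequentially_seg[of "\<lambda>n. 0 < T n" 2] by simp
  ultimately have "\<forall>\<^sub>F n in sequentially. \<bar>ln (T (Suc (Suc n))) - ln (T n)\<bar> \<le> 2 * e n"
    using assms(2,3)
  proof eventually_elim
    case (elim n)
    then have "\<bar>T (Suc (Suc n)) / T n - 1\<bar> \<le> 1 / 2"
      by linarith
    then have "\<bar>ln (1 + (T (Suc (Suc n)) / T n - 1))\<bar> \<le> 2 * \<bar>T (Suc (Suc n)) / T n - 1\<bar>"
      by (rule abs_ln_one_plus_le)
    then show ?case
      using elim by (simp add: ln_div)
  qed
  then obtain B where B: "\<forall>\<^sub>F n in sequentially. \<bar>ln (T n)\<bar> \<le> B"
    using bounded_if_summable_two_step_diffs[of "\<lambda>n. 2 * e n" "\<lambda>n. ln (T n)"] assms(1) by auto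
  have "\<forall>\<^sub>F n in sequentially. exp (- B) \<le> T n \<and> T n \<le> exp B"
    using B assms(2)
  proof eventually_elim
    case (elim n)
    then have "- B \<le> ln (T n)" "ln (T n) \<le> B"
      by auto
    then have "exp (- B) \<le> exp (ln (T n))" "exp (ln (T n)) \<le> exp B"
      by (simp_all only: exp_le_cancel_iff)
    then show ?case
      using elim by simp
  qed
  then show ?thesis
    by (intro exI[of _ "exp (- B)"] exI[of _ "exp B"]) simp
qed

section \<open>Growth of the Christoffel--Darboux sums\<close>

lemma two_step_ratio_minus_one_eq:
  fixes n \<rho> :: real
  assumes "0 < n"
  shows "(1 + (1 + \<rho>) / n)\<^sup>2 * n / (n + 2) - 1 = (1 + 2 * (n + 1) * \<rho> + \<rho>\<^sup>2) / (n * (n + 2))"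
proof -
  have "1 + (1 + \<rho>) / n = (n + 1 + \<rho>) / n"
    using assms by (simp add: field_simps)
  then have "(1 + (1 + \<rho>) / n)\<^sup>2 * n / (n + 2) = (n + 1 + \<rho>)\<^sup>2 / (n * (n + 2))"
    using assms by (simp add: power_divide power2_eq_square)
  also have "\<dots> = (n * (n + 2) + (1 + 2 * (n + 1) * \<rho> + \<rho>\<^sup>2)) / (n * (n + 2))"
    by (simp add: power2_eq_square algebra_simps)
  also have "\<dots> = 1 + (1 + 2 * (n + 1) * \<rho> + \<rho>\<^sup>2) / (n * (n + 2))"
    using assms by (simp add: add_divide_distrib)
  finally show ?thesis
    by simp
qed

lemma two_step_ratio_deviation_le:
  fixes n \<rho> K :: real
  assumes "1 \<le> n" and "\<rho>\<^sup>2 * n \<le> K"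
  shows "\<bar>(1 + (1 + \<rho>) / n)\<^sup>2 * n / (n + 2) - 1\<bar> \<le> (1 + 4 * sqrt K + K) / (n * sqrt n)"
proof -
  have "0 < n" "1 \<le> sqrt n"
    using assms(1) by auto
  have "sqrt n \<le> n"
    using mult_left_mono[OF \<open>1 \<le> sqrt n\<close>, of "sqrt n"] \<open>0 < n\<close> by simp
  have "0 \<le> \<rho>\<^sup>2 * n"
    using \<open>0 < n\<close> by simp
  then have "0 \<le> K"
    using assms(2) by linarith
  have "\<bar>\<rho>\<bar> * sqrt n \<le> sqrt K"
    using real_sqrt_le_mono[OF assms(2)] by (simp add: real_sqrt_mult)
  have num: "\<bar>1 + 2 * (n + 1) * \<rho> + \<rho>\<^sup>2\<bar> \<le> 1 + 4 * n * \<bar>\<rho>\<bar> + \<rho>\<^sup>2"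
  proof -
    have "\<bar>2 * (n + 1) * \<rho>\<bar> \<le> 4 * n * \<bar>\<rho>\<bar>"
      using assms(1) by (simp add: abs_mult mult_right_mono)
    then show ?thesis
      unfolding abs_le_iff by (smt (verit) abs_ge_self abs_ge_minus_self zero_le_power2)
  qed
  have main: "(1 + 4 * n * \<bar>\<rho>\<bar> + \<rho>\<^sup>2) * sqrt n \<le> (1 + 4 * sqrt K + K) * n"
  proof -
    have "4 * n * \<bar>\<rho>\<bar> * sqrt n \<le> 4 * n * sqrt K"
      using mult_left_mono[OF \<open>\<bar>\<rho>\<bar> * sqrt n \<le> sqrt K\<close>, of "4 * n"] \<open>0 < n\<close>
      by (simp add: mult_ac)
    moreover have "\<rho>\<^sup>2 * sqrt n \<le> K * n"
      using mult_left_mono[OF \<open>sqrt n \<le> n\<close>, of "\<rho>\<^sup>2"] assms \<open>0 \<le> K\<close>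
        mult_left_mono[OF \<open>1 \<le> n\<close>, of K] by (simp add: mult_ac)
    ultimately show ?thesis
      using \<open>sqrt n \<le> n\<close> by (simp add: algebra_simps)
  qed
  have "\<bar>(1 + 2 * (n + 1) * \<rho> + \<rho>\<^sup>2) / (n * (n + 2))\<bar> \<le> (1 + 4 * n * \<bar>\<rho>\<bar> + \<rho>\<^sup>2) / (n * (n + 2))"
    using num \<open>0 < n\<close> by (simp add: abs_divide divide_right_mono)
  also have "\<dots> \<le> (1 + 4 * n * \<bar>\<rho>\<bar> + \<rho>\<^sup>2) / (n * n)"
    using \<open>0 < n\<close> by (intro divide_left_mono) auto
  also have "\<dots> \<le> (1 + 4 * sqrt K + K) / (n * sqrt n)"
    using mult_left_mono[OF main, of n] \<open>0 < n\<close> \<open>1 \<le> sqrt n\<close> by (simp add: field_simps)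
  finally show ?thesis
    by (simp only: two_step_ratio_minus_one_eq[OF \<open>0 < n\<close>])
qed

lemma summable_inverse_mult_sqrt: "summable (\<lambda>n. 1 / (real n * sqrt (real n)))"
proof -
  have "1 / (real n * sqrt (real n)) = real n powr (- 3 / 2)" for n
  proof (cases "n = 0")
    case False
    then have "real n powr (3 / 2) = real n * sqrt (real n)"
      using powr_add[of "real n" 1 "1 / 2"] by (simp add: powr_half_sqrt)
    then show ?thesis
      by (simp add: powr_minus_divide)
  qed simp
  then show ?thesis
    by (simp add: summable_real_powr_iff)
qed

lemma eventually_sq_le_real: "\<forall>\<^sub>F n in sequentially. (u::real)\<^sup>2 \<le> real n \<and> 2 \<le> n"
proof -
  have "\<forall>\<^sub>F n in sequentially. nat \<lceil>u\<^sup>2\<rceil> \<le> n \<and> 2 \<le> n"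
    by (intro eventually_conj eventually_ge_at_top)
  then show ?thesis
    by eventually_elim (meson order_trans real_nat_ceiling_ge of_nat_mono)
qed

lemma hermite_sq_sum_two_step_ratio:
  assumes "u\<^sup>2 \<le> real n" "2 \<le> n"
  defines "T \<equiv> \<lambda>n. (hermite_sq_sum u n)\<^sup>2 / real n" and "K \<equiv> 16 * (u\<^sup>2 + 2)"
  shows "\<bar>T (Suc (Suc n)) / T n - 1\<bar> \<le> (1 + 4 * sqrt K + K) / (real n * sqrt (real n))"
proof -
  define S \<epsilon> where "S = hermite_sq_sum u n" and "\<epsilon> = u * hermite_cross u n - hermite_sq u (Suc n)"
  define R where "R = 1 + (1 + \<epsilon> / S) / real n"
  have "0 < S" "0 < real n"
    using hermite_sq_sum_ge_1[of n u] assms by (auto simp: S_def)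
  have "hermite_sq u n + hermite_sq u (Suc n) = (S + \<epsilon>) / real n"
    unfolding S_def \<epsilon>_def hermite_sq_pair_eq[symmetric] using \<open>0 < real n\<close> by simp
  then have "hermite_sq_sum u (Suc (Suc n)) = S + (S + \<epsilon>) / real n"
    by (simp add: hermite_sq_sum_Suc S_def add.assoc)
  also have "\<dots> = S * R"
    using \<open>0 < S\<close> \<open>0 < real n\<close> by (simp add: R_def field_simps)
  finally have "T (Suc (Suc n)) / T n = (S * R)\<^sup>2 / (real n + 2) / (S\<^sup>2 / real n)"
    by (simp add: T_def S_def)
  then have ratio: "T (Suc (Suc n)) / T n = R\<^sup>2 * real n / (real n + 2)"
    using \<open>0 < S\<close> \<open>0 < real n\<close> by (simp add: power_mult_distrib)
  have "(\<epsilon> / S)\<^sup>2 * real n \<le> K"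
    using hermite_sq_pair_error_le[OF assms(1,2)] \<open>0 < S\<close>
    by (simp add: K_def S_def \<epsilon>_def power_divide field_simps)
  then show ?thesis
    using two_step_ratio_deviation_le[of "real n" "\<epsilon> / S" K] assms ratio by (simp add: R_def)
qed

lemma hermite_sq_sum_asymp:
  "\<exists>a A. 0 < a \<and> (\<forall>\<^sub>F n in sequentially.
      a * sqrt (real n) \<le> hermite_sq_sum u n \<and> hermite_sq_sum u n \<le> A * sqrt (real n))"
proof -
  define T where "T n = (hermite_sq_sum u n)\<^sup>2 / real n" for n
  define C where "C = 1 + 4 * sqrt (16 * (u\<^sup>2 + 2)) + 16 * (u\<^sup>2 + 2)"
  have "summable (\<lambda>n. C * (1 / (real n * sqrt (real n))))"
    by (intro summable_mult summable_inverse_mult_sqrt)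
  moreover have "\<forall>\<^sub>F n in sequentially. 0 < T n"
    using eventually_sq_le_real[of u]
  proof eventually_elim
    case (elim n)
    then have "0 < hermite_sq_sum u n"
      using hermite_sq_sum_ge_1[of n u] by simp
    then show ?case
      unfolding T_def using elim by (intro divide_pos_pos) auto
  qed
  moreover have "\<forall>\<^sub>F n in sequentially. \<bar>T (Suc (Suc n)) / T n - 1\<bar> \<le> C * (1 / (real n * sqrt (real n)))"
    using eventually_sq_le_real[of u]
    by eventually_elim (use hermite_sq_sum_two_step_ratio in \<open>simp add: T_def C_def\<close>)
  ultimately obtain a A where "0 < a" and bounds: "\<forall>\<^sub>F n in sequentially. a \<le> T n \<and> T n \<le> A"
    using bounds_if_summable_two_step_ratios by blast
  have "\<forall>\<^sub>F n in sequentially. sqrt a * sqrt (real n) \<le> hermite_sq_sum u n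
          \<and> hermite_sq_sum u n \<le> sqrt A * sqrt (real n)"
    using bounds eventually_gt_at_top[of 0]
  proof eventually_elim
    case (elim n)
    have "0 \<le> hermite_sq_sum u n"
      using hermite_sq_sum_mono[of 0 n u] by (simp add: hermite_sq_sum_def)
    moreover have "a * real n \<le> (hermite_sq_sum u n)\<^sup>2" "(hermite_sq_sum u n)\<^sup>2 \<le> A * real n"
      using elim by (auto simp: T_def field_simps)
    ultimately show ?case
      by (metis real_sqrt_le_mono real_sqrt_mult real_sqrt_abs abs_of_nonneg)
  qed
  then show ?thesis
    using \<open>0 < a\<close> by (intro exI[of _ "sqrt a"] exI[of _ "sqrt A"]) simp
qed

lemma inverse_sqrt_le_powr:
  fixes m s :: real
  assumes "1 \<le> m" "- 1 / 2 \<le> s"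
  shows "1 / sqrt m \<le> m powr s"
proof -
  have "m powr (- 1 / 2) = 1 / sqrt m"
    using assms(1) powr_minus_divide[of m "1 / 2"] by (simp add: powr_half_sqrt)
  then show ?thesis
    using powr_mono[OF assms(2,1)] by simp
qed

lemma hermite_sq_le: "\<exists>C. \<forall>\<^sub>F n in sequentially. hermite_sq u n \<le> C / sqrt (real n)"
proof -
  obtain a A where "\<forall>\<^sub>F n in sequentially.
      a * sqrt (real n) \<le> hermite_sq_sum u n \<and> hermite_sq_sum u n \<le> A * sqrt (real n)"
    using hermite_sq_sum_asymp[of u] by blast
  then have "\<forall>\<^sub>F n in sequentially. hermite_sq u n \<le> 4 * A / sqrt (real n)"
    using eventually_sq_le_real[of u]
  proof eventually_elim
    case (elim n)
    have "real n * hermite_sq u n \<le> real n * (hermite_sq u n + hermite_sq u (Suc n))"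
      using hermite_sq_nonneg[of u "Suc n"] by (simp add: distrib_left)
    also have "\<dots> \<le> 4 * hermite_sq_sum u n"
      using elim by (intro hermite_sq_pair_le) auto
    also have "\<dots> \<le> 4 * A * sqrt (real n)"
      using elim by simp
    finally have "hermite_sq u n \<le> 4 * A * (sqrt (real n) / real n)"
      using elim by (simp add: pos_le_divide_eq mult_ac)
    then show ?case
      using sqrt_divide_self_eq[of "real n"] by (simp add: divide_inverse)
  qed
  then show ?thesis
    by blast
qed

lemma hermite_sq_pair_ge:
  "\<exists>c>0. \<forall>\<^sub>F n in sequentially. c / sqrt (real n) \<le> hermite_sq u n + hermite_sq u (Suc n)"
proof -
  obtain a A where "0 < a" and bounds: "\<forall>\<^sub>F n in sequentially.
      a * sqrt (real n) \<le> hermite_sq_sum u n \<and> hermite_sq_sum u n \<le> A * sqrt (real n)"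
    using hermite_sq_sum_asymp[of u] by blast
  from bounds have "\<forall>\<^sub>F n in sequentially. a / 3 / sqrt (real n) \<le> hermite_sq u n + hermite_sq u (Suc n)"
    using eventually_sq_le_real[of u]
  proof eventually_elim
    case (elim n)
    have "a / 3 / sqrt (real n) * (3 / 2 * real (Suc n)) = a * real (Suc n) / (2 * sqrt (real n))"
      using elim by (simp add: field_simps)
    also have "\<dots> \<le> a * (2 * real n) / (2 * sqrt (real n))"
      using elim \<open>0 < a\<close> by (intro divide_right_mono mult_left_mono) auto
    also have "\<dots> = a * (real n / sqrt (real n))"
      by simp
    also have "\<dots> = a * sqrt (real n)"
      by (simp add: real_div_sqrt)
    also have "\<dots> \<le> hermite_sq_sum u (Suc n)"
      using elim hermite_sq_sum_mono[of n "Suc n" u] by linarith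
    also have "\<dots> \<le> (hermite_sq u n + hermite_sq u (Suc n)) * (3 / 2 * real (Suc n))"
      using elim hermite_sq_sum_Suc_le[of u n] by (simp add: mult_ac)
    finally show ?case
      by (rule mult_right_le_imp_le) simp
  qed
  then show ?thesis
    using \<open>0 < a\<close> by (intro exI[of _ "a / 3"]) auto
qed

lemma summable_powr_hermite_sq:
  assumes "s < - 1 / 2"
  shows "summable (\<lambda>n. real (Suc n) powr s * hermite_sq u n)"
proof -
  obtain C where upper: "\<forall>\<^sub>F n in sequentially. hermite_sq u n \<le> C / sqrt (real n)"
    using hermite_sq_le by blast
  have "\<forall>\<^sub>F n in sequentially. norm (real (Suc n) powr s * hermite_sq u n) \<le> C * real n powr (s - 1 / 2)"
    using upper eventually_gt_at_top[of 0]
  proof eventually_elim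
    case (elim n)
    have "norm (real (Suc n) powr s * hermite_sq u n) = real (Suc n) powr s * hermite_sq u n"
      by (simp add: hermite_sq_nonneg)
    also have "\<dots> \<le> real n powr s * (C / sqrt (real n))"
      using elim assms by (intro mult_mono powr_mono2') (auto simp: hermite_sq_nonneg)
    also have "\<dots> = C * real n powr (s - 1 / 2)"
      by (simp add: powr_diff powr_half_sqrt)
    finally show ?case .
  qed
  moreover have "summable (\<lambda>n. C * real n powr (s - 1 / 2))"
    using assms by (intro summable_mult) (simp add: summable_real_powr_iff)
  ultimately show ?thesis
    by (rule summable_comparison_test_ev)
qed

lemma powr_hermite_sq_pair_ge:
  assumes "- 1 / 2 \<le> s"
  shows "\<exists>c>0. \<forall>\<^sub>F n in sequentially. c * inverse (real n + 2)
           \<le> real (Suc n) powr s * hermite_sq u n + real (Suc (Suc n)) powr s * hermite_sq u (Suc n)"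
proof -
  obtain c where "0 < c"
    and lower: "\<forall>\<^sub>F n in sequentially. c / sqrt (real n) \<le> hermite_sq u n + hermite_sq u (Suc n)"
    using hermite_sq_pair_ge by blast
  have "\<forall>\<^sub>F n in sequentially. c * inverse (real n + 2)
          \<le> real (Suc n) powr s * hermite_sq u n + real (Suc (Suc n)) powr s * hermite_sq u (Suc n)"
    using lower eventually_gt_at_top[of 0]
  proof eventually_elim
    case (elim n)
    have "sqrt (real n) * sqrt (real n + 2) \<le> sqrt (real n + 2) * sqrt (real n + 2)"
      by (intro mult_right_mono) auto
    then have "c / (real n + 2) \<le> c / (sqrt (real n) * sqrt (real n + 2))"
      using elim \<open>0 < c\<close> by (intro divide_left_mono) auto
    then have "c * inverse (real n + 2) \<le> c / sqrt (real n) / sqrt (real n + 2)"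
      by (simp add: divide_inverse)
    also have "\<dots> \<le> 1 / sqrt (real n + 2) * hermite_sq u n + 1 / sqrt (real n + 2) * hermite_sq u (Suc n)"
      using divide_right_mono[OF elim(1), of "sqrt (real n + 2)"] by (simp add: add_divide_distrib)
    also have "\<dots> \<le> real (Suc n) powr s * hermite_sq u n + real (Suc (Suc n)) powr s * hermite_sq u (Suc n)"
    proof (intro add_mono mult_right_mono hermite_sq_nonneg)
      have "1 / sqrt (real n + 2) \<le> 1 / sqrt (real (Suc n))"
        by (intro divide_left_mono real_sqrt_le_mono) auto
      also have "\<dots> \<le> real (Suc n) powr s"
        using assms by (intro inverse_sqrt_le_powr) auto
      finally show "1 / sqrt (real n + 2) \<le> real (Suc n) powr s" .
      show "1 / sqrt (real n + 2) \<le> real (Suc (Suc n)) powr s"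
        using inverse_sqrt_le_powr[of "real (Suc (Suc n))" s] assms by (simp add: add.commute)
    qed
    finally show ?case .
  qed
  then show ?thesis
    using \<open>0 < c\<close> by blast
qed

lemma not_summable_powr_hermite_sq:
  assumes "- 1 / 2 \<le> s"
  shows "\<not> summable (\<lambda>n. real (Suc n) powr s * hermite_sq u n)"
proof
  define f where "f n = real (Suc n) powr s * hermite_sq u n" for n
  assume "summable (\<lambda>n. real (Suc n) powr s * hermite_sq u n)"
  then have "summable f"
    by (simp add: f_def[abs_def])
  then have "summable (\<lambda>n. f n + f (Suc n))"
    by (intro summable_add) (simp_all add: summable_Suc_iff)
  moreover obtain c where "0 < c" and "\<forall>\<^sub>F n in sequentially. c * inverse (real n + 2) \<le> f n + f (Suc n)"
    using powr_hermite_sq_pair_ge[OF assms, of u] by (auto simp: f_def)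
  then have "\<forall>\<^sub>F n in sequentially. norm (c * inverse (real n + 2)) \<le> f n + f (Suc n)"
    by (auto elim: eventually_mono)
  ultimately have "summable (\<lambda>n. c * inverse (real n + 2))"
    by (rule summable_comparison_test_ev[rotated])
  then have "summable (\<lambda>n. inverse (real (n + 2)))"
    using \<open>0 < c\<close> by (simp add: add.commute)
  then show False
    using summable_iff_shift[of "\<lambda>n. inverse (real n)" 2] not_summable_harmonic[where 'a = real]
    by blast
qed

lemma summable_powr_hermite_sq_iff:
  "summable (\<lambda>n. real (Suc n) powr s * hermite_sq u n) \<longleftrightarrow> s < - 1 / 2"
proof (cases "s < - 1 / 2")
  case True
  then show ?thesis
    using summable_powr_hermite_sq by simp
next
  case False
  then show ?thesis
    using not_summable_powr_hermite_sq[of s u] by simp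
qed

lemma asymp_comparable_sym: "asymp_comparable f g \<Longrightarrow> asymp_comparable g f"
  by (auto simp: asymp_comparable_def elim: eventually_mono)

lemma summable_mult_asymp_comparable:
  assumes "asymp_comparable f g" and "\<And>n. 0 \<le> w n" and "summable (\<lambda>n. w n * g n)"
  shows "summable (\<lambda>n. w n * f n)"
proof -
  obtain C where pos: "\<forall>\<^sub>F n in sequentially. 0 < f n \<and> 0 < g n"
    and ratio: "\<forall>\<^sub>F n in sequentially. f n / g n \<le> C"
    using assms(1) by (auto simp: asymp_comparable_def)
  have "\<forall>\<^sub>F n in sequentially. norm (w n * f n) \<le> C * (w n * g n)"
    using pos ratio
  proof eventually_elim
    case (elim n)
    then have "f n \<le> C * g n"
      by (simp add: divide_le_eq)
    then have "w n * f n \<le> w n * (C * g n)"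
      using assms(2) by (rule mult_left_mono)
    then show ?case
      using elim assms(2)[of n] by (simp add: abs_mult mult.left_commute)
  qed
  moreover have "summable (\<lambda>n. C * (w n * g n))"
    using assms(3) by (rule summable_mult)
  ultimately show ?thesis
    by (rule summable_comparison_test_ev)
qed

lemma summable_mult_asymp_comparable_iff:
  assumes "asymp_comparable f g" and "\<And>n. 0 \<le> w n"
  shows "summable (\<lambda>n. w n * f n) \<longleftrightarrow> summable (\<lambda>n. w n * g n)"
proof
  assume "summable (\<lambda>n. w n * f n)"
  then show "summable (\<lambda>n. w n * g n)"
    by (rule summable_mult_asymp_comparable[OF asymp_comparable_sym[OF assms(1)] assms(2)])
next
  assume "summable (\<lambda>n. w n * g n)"
  then show "summable (\<lambda>n. w n * f n)"
    by (rule summable_mult_asymp_comparable[OF assms])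
qed

lemma D_p2_term_indicator_atLeast_Suc:
  "real (Suc n) ^ p * fact (Suc n) * (hermite_coeff (indicator {u..}) (Suc n))\<^sup>2 * real (Suc n) powr r
     = (std_normal_density u)\<^sup>2 * (real (Suc n) powr (real p - 1 + r) * hermite_sq u n)"
proof -
  have coeff: "real (Suc n) ^ p * fact (Suc n) * (hermite_coeff (indicator {u..}) (Suc n))\<^sup>2
      = (std_normal_density u)\<^sup>2 * (real (Suc n) ^ p / real (Suc n)) * hermite_sq u n"
    by (simp add: hermite_coeff_indicator_atLeast_Suc hermite_sq_def power2_eq_square field_simps
        del: of_nat_Suc)
  have power: "real (Suc n) ^ p / real (Suc n) * real (Suc n) powr r = real (Suc n) powr (real p - 1 + r)"
    by (simp add: powr_add powr_diff powr_realpow del: of_nat_Suc)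
  show ?thesis
    unfolding coeff power[symmetric] by (simp only: mult_ac)
qed

theorem theorem1:
  fixes M :: "'a measure" and P :: "'w measure" and B :: "'a \<Rightarrow> 'w \<Rightarrow> real"
    and \<beta> :: real and u :: real and p :: nat
  assumes "finite_measure M"
    and "std_gaussian_field M P B"
    and "\<beta> > 0"
    and "asymp_comparable (kernel_moment M (cov_kernel P B)) (\<lambda>q. real q powr (- \<beta>))"
  shows "in_D_p2 M (cov_kernel P B) (indicator {u..}) p \<longleftrightarrow> real p < \<beta> + 1 / 2"
proof -
  define w where "w q = real q ^ p * fact q * (hermite_coeff (indicator {u..}) q)\<^sup>2" for q
  have "0 < std_normal_density u"
    by (simp add: normal_density_pos)
  have "in_D_p2 M (cov_kernel P B) (indicator {u..}) p
      \<longleftrightarrow> summable (\<lambda>q. w q * kernel_moment M (cov_kernel P B) q)"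
    by (simp add: in_D_p2_def w_def)
  also have "\<dots> \<longleftrightarrow> summable (\<lambda>q. w q * real q powr (- \<beta>))"
    using assms(4) by (intro summable_mult_asymp_comparable_iff) (simp_all add: w_def)
  also have "\<dots> \<longleftrightarrow> summable (\<lambda>n. w (Suc n) * real (Suc n) powr (- \<beta>))"
    by (rule summable_Suc_iff[symmetric])
  also have "\<dots> \<longleftrightarrow> summable (\<lambda>n. (std_normal_density u)\<^sup>2 * (real (Suc n) powr (real p - 1 - \<beta>) * hermite_sq u n))"
    unfolding w_def D_p2_term_indicator_atLeast_Suc by simp
  also have "\<dots> \<longleftrightarrow> summable (\<lambda>n. real (Suc n) powr (real p - 1 - \<beta>) * hermite_sq u n)"
    using \<open>0 < std_normal_density u\<close> by (simp add: summable_cmult_iff)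
  also have "\<dots> \<longleftrightarrow> real p < \<beta> + 1 / 2"
    unfolding summable_powr_hermite_sq_iff by auto
  finally show ?thesis .
qed

end
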